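(* Let $k\geq 1$ and $n\geq 2$ be integers, let $\Omega>0$, $0<\sigma\leq m_{\min}$, and set \[ \tau=\frac{e^{-1}}{\Omega}\Big(\frac{\sigma}{m_{\min}}\Big)^{\frac{1}{2n-1}}. \] Then there exist a positive discrete measure $\mu=\sum_{j=1}^{n}a_j \delta_{\mathbf y_j}$ on $\mathbb R^k$ (all $a_j>0$) whose $n$ supports are the points $\big(-(n-\tfrac12)\tau+2m\tau,0,\dots,0\big)\in\mathbb R^k$, $m=0,1,\dots,n-1$, and a positive discrete measure $\hat \mu=\sum_{j=1}^{n}\hat a_j \delta_{\hat{\mathbf y}_j}$ on $\mathbb R^k$ (all $\hat a_j>0$) whose $n$ supports are the points $\big(-(n-\tfrac32)\tau+2m\tau,0,\dots,0\big)\in\mathbb R^k$, $m=0,1,\dots,n-1$, such that \[ \max_{\boldsymbol\omega\in\mathbb R^k,\ \|\boldsymbol\omega\|_2\leq\Omega}\big|\mathcal F[\hat \mu](\boldsymbol\omega)- \mathcal F[\mu](\boldsymbol\omega)\big|< \sigma, \qquad \min_{1\leq j\leq n}|a_j|= m_{\min}. \]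
   Context: For a discrete measure $\nu=\sum_{j} c_j\delta_{\mathbf x_j}$ on $\mathbb R^k$, its Fourier transform is $\mathcal F[\nu](\boldsymbol\omega)=\sum_j c_j e^{i \mathbf x_j\cdot\boldsymbol\omega}$, $\boldsymbol\omega\in\mathbb R^k$. Here $\Omega>0$ is the cutoff frequency, $\sigma>0$ the noise level and $m_{\min}>0$ a prescribed minimal amplitude. *)

theory Defs
  imports Complex_Main
begin

(* Vectors in R^k are represented as functions nat => real, only coordinates 0..k-1 matter. *)

definition dotk :: "nat \<Rightarrow> (nat \<Rightarrow> real) \<Rightarrow> (nat \<Rightarrow> real) \<Rightarrow> real" where
  "dotk k x w = (\<Sum>i<k. x i * w i)"

definition norm2k :: "nat \<Rightarrow> (nat \<Rightarrow> real) \<Rightarrow> real" where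
  "norm2k k w = sqrt (\<Sum>i<k. (w i)^2)"

definition fourier_disc :: "nat \<Rightarrow> nat \<Rightarrow> (nat \<Rightarrow> real) \<Rightarrow> (nat \<Rightarrow> nat \<Rightarrow> real)
    \<Rightarrow> (nat \<Rightarrow> real) \<Rightarrow> complex" where
  "fourier_disc k n c x w = (\<Sum>j<n. complex_of_real (c j) * exp (\<i> * complex_of_real (dotk k (x j) w)))"

definition tau34 :: "nat \<Rightarrow> real \<Rightarrow> real \<Rightarrow> real \<Rightarrow> real" where
  "tau34 n \<Omega> \<sigma> mmin = exp (-1) / \<Omega> * (\<sigma> / mmin) powr (1 / (2 * real n - 1))"

definition first_axis :: "real \<Rightarrow> nat \<Rightarrow> real" where
  "first_axis t = (\<lambda>i. if i = 0 then t else 0)"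

end

theory Submission
  imports Defs "HOL-Analysis.Complex_Transcendental"
begin

(* Let N = 2n - 1 and put the weights mmin * (N choose l) at the points x0 + l * tau, l = 0..N,
   the even l forming mu and the odd l forming mu-hat. Then mu-hat - mu is, up to sign, mmin times
   the N-th finite difference of a Dirac mass, so its Fourier transform at omega is
   -mmin e^(i x0 omega_1) (1 - e^(i tau omega_1))^N. As |1 - e^(it)| <= |t|, its modulus is at most
   mmin (tau Omega)^N = e^(-N) sigma < sigma, while the smallest weight of mu is mmin (N choose 0). *)

lemma norm_one_minus_exp_ii_le: "cmod (1 - exp (\<i> * of_real t)) \<le> \<bar>t\<bar>"
proof -
  have "cmod (1 - exp (\<i> * of_real t)) = 2 * \<bar>sin (t / 2)\<bar>"
    by (metis dist_exp_i_1 norm_minus_commute)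
  also have "\<dots> \<le> \<bar>t\<bar>"
    using abs_sin_x_le_abs_x[of "t / 2"] by simp
  finally show ?thesis .
qed

lemma exp_ii_arith_progression:
  "exp (\<i> * of_real ((x\<^sub>0 + real l * \<tau>) * s))
     = exp (\<i> * of_real (x\<^sub>0 * s)) * exp (\<i> * of_real (\<tau> * s)) ^ l"
proof -
  have "\<i> * of_real ((x\<^sub>0 + real l * \<tau>) * s)
      = \<i> * of_real (x\<^sub>0 * s) + of_nat l * (\<i> * of_real (\<tau> * s))"
    by (simp add: algebra_simps)
  then show ?thesis
    by (simp only: exp_add exp_of_nat_mult)
qed

lemma sum_lessThan_double:
  fixes f :: "nat \<Rightarrow> 'a::comm_monoid_add"
  shows "(\<Sum>l<2 * n. f l) = (\<Sum>m<n. f (2 * m) + f (2 * m + 1))"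
  by (induction n) (simp_all add: add.assoc)

lemma binomial_odd_minus_even:
  fixes z :: "'a::comm_ring_1"
  assumes "n > 0"
  shows "(\<Sum>m<n. of_nat ((2*n - 1) choose (2*m + 1)) * z ^ (2*m + 1)
                - of_nat ((2*n - 1) choose (2*m)) * z ^ (2*m)) = - ((1 - z) ^ (2*n - 1))"
proof -
  let ?f = "\<lambda>l. of_nat ((2*n - 1) choose l) * (- z) ^ l * 1 ^ (2*n - 1 - l)"
  have "(1 - z) ^ (2*n - 1) = (\<Sum>l\<le>2*n - 1. ?f l)"
    using binomial_ring[of "- z" 1 "2*n - 1"] by simp
  also have "\<dots> = (\<Sum>l<2*n. ?f l)"
    using assms by (simp flip: lessThan_Suc_atMost)
  also have "\<dots> = (\<Sum>m<n. ?f (2*m) + ?f (2*m + 1))"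
    by (rule sum_lessThan_double)
  also have "\<dots> = - (\<Sum>m<n. of_nat ((2*n - 1) choose (2*m + 1)) * z ^ (2*m + 1)
                - of_nat ((2*n - 1) choose (2*m)) * z ^ (2*m))"
    by (simp add: sum_negf[symmetric] power_minus')
  finally show ?thesis
    by (simp add: minus_equation_iff)
qed

lemma dotk_first_axis:
  assumes "k \<ge> 1"
  shows "dotk k (first_axis t) w = t * w 0"
proof -
  have "dotk k (first_axis t) w = (\<Sum>i<k. if i = 0 then t * w 0 else 0)"
    unfolding dotk_def first_axis_def by (rule sum.cong) auto
  then show ?thesis
    using assms by simp
qed

lemma abs_le_norm2k:
  assumes "i < k"
  shows "\<bar>w i\<bar> \<le> norm2k k w"
proof -
  have "(w i)\<^sup>2 \<le> (\<Sum>i<k. (w i)\<^sup>2)"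
    using assms by (intro member_le_sum) auto
  then show ?thesis
    unfolding norm2k_def using real_sqrt_le_mono by fastforce
qed

definition binomial_weights :: "nat \<Rightarrow> real \<Rightarrow> nat \<Rightarrow> real" where
  "binomial_weights N c l = c * real (N choose l)"

lemma binomial_weights_pos: "c > 0 \<Longrightarrow> l \<le> N \<Longrightarrow> binomial_weights N c l > 0"
  by (simp add: binomial_weights_def)

lemma Min_abs_binomial_weights_even:
  assumes "c > 0" "n > 0"
  shows "Min ((\<lambda>j. \<bar>binomial_weights (2*n - 1) c (2*j)\<bar>) ` {..<n}) = c"
proof (rule Min_eqI)
  show "c \<le> y" if y: "y \<in> (\<lambda>j. \<bar>binomial_weights (2*n - 1) c (2*j)\<bar>) ` {..<n}" for y
  proof -
    obtain j where "j < n" "y = \<bar>binomial_weights (2*n - 1) c (2*j)\<bar>"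
      using y by blast
    moreover have "real ((2*n - 1) choose (2*j)) \<ge> 1"
      using \<open>j < n\<close> by (simp add: Suc_leI)
    ultimately show ?thesis
      using assms by (simp add: binomial_weights_def)
  qed
  show "c \<in> (\<lambda>j. \<bar>binomial_weights (2*n - 1) c (2*j)\<bar>) ` {..<n}"
    using assms by (intro image_eqI[of _ _ 0]) (auto simp: binomial_weights_def)
qed simp

lemma fourier_disc_binomial_difference:
  assumes "k \<ge> 1" "n > 0"
  shows "fourier_disc k n (\<lambda>j. binomial_weights (2*n - 1) c (2*j + 1))
             (\<lambda>j. first_axis (x\<^sub>0 + real (2*j + 1) * \<tau>)) w
       - fourier_disc k n (\<lambda>j. binomial_weights (2*n - 1) c (2*j))
             (\<lambda>j. first_axis (x\<^sub>0 + real (2*j) * \<tau>)) w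
       = - (of_real c * exp (\<i> * of_real (x\<^sub>0 * w 0)) * (1 - exp (\<i> * of_real (\<tau> * w 0))) ^ (2*n - 1))"
proof -
  define z where "z = exp (\<i> * of_real (\<tau> * w 0))"
  have "fourier_disc k n (\<lambda>j. binomial_weights (2*n - 1) c (2*j + 1))
             (\<lambda>j. first_axis (x\<^sub>0 + real (2*j + 1) * \<tau>)) w
       - fourier_disc k n (\<lambda>j. binomial_weights (2*n - 1) c (2*j))
             (\<lambda>j. first_axis (x\<^sub>0 + real (2*j) * \<tau>)) w
     = of_real c * exp (\<i> * of_real (x\<^sub>0 * w 0)) *
       (\<Sum>m<n. of_nat ((2*n - 1) choose (2*m + 1)) * z ^ (2*m + 1)
              - of_nat ((2*n - 1) choose (2*m)) * z ^ (2*m))"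
    unfolding fourier_disc_def dotk_first_axis[OF assms(1)] exp_ii_arith_progression z_def
    by (simp add: binomial_weights_def sum_distrib_left sum_subtractf algebra_simps)
  then show ?thesis
    unfolding z_def binomial_odd_minus_even[OF assms(2)] by simp
qed

lemma norm_fourier_disc_binomial_difference_le:
  assumes "k \<ge> 1" "n > 0" "c \<ge> 0" "\<tau> \<ge> 0" "norm2k k w \<le> \<Omega>"
  shows "cmod (fourier_disc k n (\<lambda>j. binomial_weights (2*n - 1) c (2*j + 1))
                  (\<lambda>j. first_axis (x\<^sub>0 + real (2*j + 1) * \<tau>)) w
             - fourier_disc k n (\<lambda>j. binomial_weights (2*n - 1) c (2*j))
                  (\<lambda>j. first_axis (x\<^sub>0 + real (2*j) * \<tau>)) w)
         \<le> c * (\<tau> * \<Omega>) ^ (2*n - 1)"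
proof -
  have "\<bar>\<tau> * w 0\<bar> \<le> \<tau> * \<Omega>"
    using abs_le_norm2k[of 0 k w] assms by (simp add: abs_mult mult_left_mono)
  then have "cmod (1 - exp (\<i> * of_real (\<tau> * w 0))) ^ (2*n - 1) \<le> (\<tau> * \<Omega>) ^ (2*n - 1)"
    using norm_one_minus_exp_ii_le by (meson norm_ge_zero order_trans power_mono)
  then show ?thesis
    unfolding fourier_disc_binomial_difference[OF assms(1,2)] using assms(3)
    by (simp add: norm_mult norm_power mult_left_mono)
qed

lemma tau34_mult_power:
  assumes "n > 0" "\<Omega> > 0" "\<sigma> > 0" "mmin > 0"
  shows "(tau34 n \<Omega> \<sigma> mmin * \<Omega>) ^ (2*n - 1) = exp (-1) ^ (2*n - 1) * (\<sigma> / mmin)"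
proof -
  have "tau34 n \<Omega> \<sigma> mmin * \<Omega> = exp (-1) * (\<sigma> / mmin) powr (1 / real (2*n - 1))"
    using assms by (simp add: tau34_def of_nat_diff)
  moreover have "((\<sigma> / mmin) powr (1 / real (2*n - 1))) ^ (2*n - 1) = \<sigma> / mmin"
    using assms by (simp add: powr_realpow[symmetric] powr_powr)
  ultimately show ?thesis
    by (simp add: power_mult_distrib)
qed

theorem theorem3p4:
  fixes k n :: nat and \<Omega> \<sigma> mmin :: real
  assumes "k \<ge> 1" and "n \<ge> 2" and "\<Omega> > 0" and "0 < \<sigma>" and "\<sigma> \<le> mmin"
  shows "\<exists>a ahat :: nat \<Rightarrow> real.
    (\<forall>j<n. a j > 0) \<and> (\<forall>j<n. ahat j > 0) \<and>
    (\<forall>w :: nat \<Rightarrow> real. norm2k k w \<le> \<Omega> \<longrightarrow>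
       cmod (fourier_disc k n ahat
               (\<lambda>m. first_axis (- (real n - 3/2) * tau34 n \<Omega> \<sigma> mmin + 2 * real m * tau34 n \<Omega> \<sigma> mmin)) w
           - fourier_disc k n a
               (\<lambda>m. first_axis (- (real n - 1/2) * tau34 n \<Omega> \<sigma> mmin + 2 * real m * tau34 n \<Omega> \<sigma> mmin)) w)
       < \<sigma>) \<and>
    Min ((\<lambda>j. \<bar>a j\<bar>) ` {..<n}) = mmin"
proof -
  define \<tau> where "\<tau> = tau34 n \<Omega> \<sigma> mmin"
  define N where "N = 2*n - 1"
  define x\<^sub>0 where "x\<^sub>0 = - (real n - 1/2) * \<tau>"
  have n: "n > 0" and mmin: "mmin > 0"
    using assms by auto
  have "\<tau> > 0"
    using assms mmin by (simp add: \<tau>_def tau34_def)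
  have grid_even: "- (real n - 1/2) * \<tau> + 2 * real m * \<tau> = x\<^sub>0 + real (2*m) * \<tau>" for m
    by (simp add: x\<^sub>0_def)
  have grid_odd: "- (real n - 3/2) * \<tau> + 2 * real m * \<tau> = x\<^sub>0 + real (2*m + 1) * \<tau>" for m
    by (simp add: x\<^sub>0_def algebra_simps)
  have "mmin * (\<tau> * \<Omega>) ^ N = exp (-1) ^ N * \<sigma>"
    using tau34_mult_power[OF n assms(3,4) mmin] mmin by (simp add: \<tau>_def N_def)
  also have "\<dots> < \<sigma>"
    using n assms(4) by (simp add: N_def power_less_one_iff)
  finally have "mmin * (\<tau> * \<Omega>) ^ N < \<sigma>" .
  then have "cmod (fourier_disc k n (\<lambda>j. binomial_weights N mmin (2*j + 1))
                    (\<lambda>j. first_axis (x\<^sub>0 + real (2*j + 1) * \<tau>)) w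
               - fourier_disc k n (\<lambda>j. binomial_weights N mmin (2*j))
                    (\<lambda>j. first_axis (x\<^sub>0 + real (2*j) * \<tau>)) w) < \<sigma>"
    if "norm2k k w \<le> \<Omega>" for w
    using norm_fourier_disc_binomial_difference_le[OF assms(1) n _ _ that, of mmin \<tau> x\<^sub>0]
      mmin \<open>\<tau> > 0\<close> unfolding N_def by linarith
  moreover have "binomial_weights N mmin (2*j) > 0" "binomial_weights N mmin (2*j + 1) > 0" if "j < n" for j
    using that mmin by (simp_all add: binomial_weights_pos N_def)
  moreover have "Min ((\<lambda>j. \<bar>binomial_weights N mmin (2*j)\<bar>) ` {..<n}) = mmin"
    unfolding N_def using Min_abs_binomial_weights_even[OF mmin n] .
  ultimately show ?thesis
    unfolding \<tau>_def[symmetric] grid_even grid_odd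
    by (intro exI[of _ "\<lambda>j. binomial_weights N mmin (2*j)"]
        exI[of _ "\<lambda>j. binomial_weights N mmin (2*j + 1)"]) blast
qed

end
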